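(* Let $F$ be the fractal cube defined in the context, and let $Q=\{\mathcal K_\alpha:\alpha\in\{0,1\}^\infty\}\subset C(\mathbb R^3)$ be the set of its connected components. Then $Q$ is the self-similar set (attractor) in $C(\mathbb R^3)$ generated by the two contractions $\widetilde T_0,\widetilde T_1$, i.e. $Q=\widetilde T_0(Q)\cup\widetilde T_1(Q)$. Moreover there is a Hölder homeomorphism $\varphi:Q\to C_{1/3}$ onto the middle-third Cantor set $C_{1/3}\subset[0,1]$ which induces an isomorphism of the self-similar structures, i.e. $\varphi\circ\widetilde T_0=S_0\circ\varphi$ and $\varphi\circ\widetilde T_1=S_1\circ\varphi$ on $Q$, where $S_0(x)=x/3$ and $S_1(x)=x/3+2/3$.
   Context: Let $I=[0,1]^3$. Let $\mathcal D_0=\{(i,2,2),(2,i,2),(2,2,i): i=0,1,2,3,4\}\subset\{0,\ldots,4\}^3$ (the "Cross", $13$ elements) and $\mathcal D_1=\{d\in\{0,\ldots,4\}^3:\ \text{at least two coordinates of } d \text{ lie in }\{0,4\}\}$ (the "Frame": the $44$ unit cubes lying along the edges of $[0,5]^3$). Put $\mathcal D=\mathcal D_0\cup\mathcal D_1$ (a disjoint union) and let $F\subset\mathbb R^3$ be the unique non-empty compact set with $F=\frac{F+\mathcal D}{5}=\bigcup_{d\in\mathcal D}\frac{F+d}{5}$. For $i=0,1$ define the Hutchinson operator $T_i(A)=\frac{\mathcal D_i+A}{5}=\bigcup_{d\in\mathcal D_i}\frac{d+A}{5}$ on sets $A\subset\mathbb R^3$, and for a finite word $\alpha_1\cdots\alpha_k\in\{0,1\}^k$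 put $T_{\alpha_1\cdots\alpha_k}=T_{\alpha_1}\circ\cdots\circ T_{\alpha_k}$. For an infinite word $\alpha=\alpha_1\alpha_2\ldots\in\{0,1\}^\infty$ put $\mathcal K_\alpha=\bigcap_{k\ge1}T_{\alpha_1\cdots\alpha_k}(I)$; each $\mathcal K_\alpha$ is a connected component of $F$ and $F=\bigcup_{\alpha}\mathcal K_\alpha$. $C(\mathbb R^3)$ denotes the hyperspace of non-empty compact subsets of $\mathbb R^3$ with the Hausdorff metric, and $\widetilde T_i:C(\mathbb R^3)\to C(\mathbb R^3)$, $\widetilde T_i(A)=T_i(A)$, is a contraction with Lipschitz constant $1/5$. *)

theory Defs
  imports "HOL-Analysis.Analysis"
begin

definition grid5 :: "(real^3) set" where
  "grid5 = {x. \<forall>k. x$k \<in> real ` {0..4::nat}}"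

definition Dcross :: "(real^3) set" where
  "Dcross = {x \<in> grid5. \<exists>k. \<forall>j. j \<noteq> k \<longrightarrow> x$j = 2}"

definition Dframe :: "(real^3) set" where
  "Dframe = {x \<in> grid5. \<exists>k1 k2. k1 \<noteq> k2 \<and> x$k1 \<in> {0,4} \<and> x$k2 \<in> {0,4}}"

definition Dig :: "nat \<Rightarrow> (real^3) set" where
  "Dig i = (if i = 0 then Dcross else Dframe)"

definition Tmap :: "nat \<Rightarrow> (real^3) set \<Rightarrow> (real^3) set" where
  "Tmap i A = (\<Union>d\<in>Dig i. (\<lambda>a. (1/5) *\<^sub>R (d + a)) ` A)"

fun Tword :: "nat list \<Rightarrow> (real^3) set \<Rightarrow> (real^3) set" where
  "Tword [] A = A"
| "Tword (i # w) A = Tmap i (Tword w A)"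

definition unit_cube :: "(real^3) set" where
  "unit_cube = {x. \<forall>k. 0 \<le> x$k \<and> x$k \<le> 1}"

text \<open>K_alpha for an infinite 0/1-word alpha :: nat => nat (alpha 0 is the first letter).\<close>
definition Kcomp :: "(nat \<Rightarrow> nat) \<Rightarrow> (real^3) set" where
  "Kcomp \<alpha> = (\<Inter>k\<in>{1..}. Tword (map \<alpha> [0..<k]) unit_cube)"

definition Qcomp :: "(real^3) set set" where
  "Qcomp = {Kcomp \<alpha> | \<alpha>. \<forall>n. \<alpha> n \<in> {0,1}}"

definition cantor_set :: "real set" where
  "cantor_set = {(\<Sum>n. 2 * real (a n) / 3 ^ Suc n) | a. \<forall>n. a n \<in> {0,1::nat}}"

text \<open>Hausdorff distance between non-empty compact subsets (used only on such sets).\<close>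
definition hausdist :: "(real^3) set \<Rightarrow> (real^3) set \<Rightarrow> real" where
  "hausdist A B = max (SUP a\<in>A. setdist {a} B) (SUP b\<in>B. setdist {b} A)"

end

theory Submission
  imports Defs
begin

text \<open>
  T_u(X) is a union of copies 5^-n (m + X), n = |u|, with integer translations m, and the component
  K_alpha is the intersection of the nested sets T_(alpha_1...alpha_k)(I).  If alpha and beta share
  their first n letters, K_alpha and K_beta sit in the same copies of level n, so their Hausdorff
  distance is at most 3 * 5^-n.  If they first differ at position j with alpha_j = 0, then K_alpha
  meets the centre cube of the Cross in some copy of level j, and that cube keeps distance
  5^-(j+1) from the Frame cubes of the same copy and from all other copies; so the distance is at
  least 5^-(j+1).  The ternary code sum 2 alpha_n 3^-(n+1) obeys the same two bounds with 3 in
  place of 5.  Hence K_alpha |-> code(alpha) is a bijection onto the Cantor set, Hoelder with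
  exponent log 3 / log 5 and with continuous inverse, and T_i(K_alpha) = K_(i alpha) makes it
  conjugate T_i to S_i.
\<close>

lemma finite_grid5: "finite grid5"
proof -
  let ?S = "real ` {0..4::nat}"
  have "grid5 \<subseteq> vec_lambda ` (PiE UNIV (\<lambda>_. ?S))"
  proof
    fix x assume "x \<in> grid5"
    then have "vec_nth x \<in> PiE UNIV (\<lambda>_. ?S)" unfolding grid5_def by auto
    then show "x \<in> vec_lambda ` (PiE UNIV (\<lambda>_. ?S))"
      by (metis image_eqI vec_nth_inverse)
  qed
  moreover have "finite (PiE (UNIV::3 set) (\<lambda>_. ?S))" by (intro finite_PiE) auto
  ultimately show ?thesis using finite_subset by blast
qed

lemma grid5_nth:
  assumes "d \<in> grid5"
  shows "d$k \<in> \<int>" and "0 \<le> d$k" and "d$k \<le> 4"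
proof -
  obtain n where "d$k = real n" "n \<le> 4" using assms unfolding grid5_def by force
  then show "d$k \<in> \<int>" "0 \<le> d$k" "d$k \<le> 4" by auto
qed

lemma Dig_subset_grid5: "Dig i \<subseteq> grid5"
  unfolding Dig_def Dcross_def Dframe_def by auto

lemma finite_Dig: "finite (Dig i)"
  using finite_subset[OF Dig_subset_grid5 finite_grid5] .

lemma centre_in_Dig0: "(\<chi> k. 2) \<in> Dig 0"
proof -
  have "(2::real) \<in> real ` {0..4::nat}" by (rule image_eqI[where x=2]) auto
  then show ?thesis unfolding Dig_def Dcross_def grid5_def by simp
qed

lemma Dig_nonempty: "Dig i \<noteq> {}"
proof -
  have "(0::real) \<in> real ` {0..4::nat}" by (rule image_eqI[where x=0]) auto
  moreover have "(1::3) \<noteq> 2" by simp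
  ultimately have "(\<chi> k. 0) \<in> Dframe" unfolding Dframe_def grid5_def by fastforce
  then show ?thesis using centre_in_Dig0 unfolding Dig_def by (cases "i = 0") auto
qed

lemma Tword_append: "Tword (u @ v) X = Tword u (Tword v X)"
  by (induction u) auto

lemma Tword_mono: "X \<subseteq> Y \<Longrightarrow> Tword u X \<subseteq> Tword u Y"
  by (induction u) (auto simp: Tmap_def)

lemma Tmap_unit_cube: "Tmap i unit_cube \<subseteq> unit_cube"
proof
  fix y assume "y \<in> Tmap i unit_cube"
  then obtain d x where d: "d \<in> Dig i" and x: "x \<in> unit_cube" and y: "y = (1/5) *\<^sub>R (d + x)"
    unfolding Tmap_def by auto
  have "0 \<le> y$k \<and> y$k \<le> 1" for k
  proof -
    have "0 \<le> d$k" "d$k \<le> 4" using grid5_nth d Dig_subset_grid5 by blast+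
    moreover have "0 \<le> x$k" "x$k \<le> 1" using x unfolding unit_cube_def by auto
    ultimately show ?thesis unfolding y by simp
  qed
  then show "y \<in> unit_cube" unfolding unit_cube_def by blast
qed

lemma Tword_eq_UN_translates:
  "\<exists>M. finite M \<and> M \<noteq> {} \<and> (\<forall>m\<in>M. \<forall>k. m$k \<in> \<int>) \<and>
     (\<forall>X. Tword u X = (\<Union>m\<in>M. (\<lambda>x. (1/5^length u) *\<^sub>R (m + x)) ` X))"
proof (induction u)
  case Nil
  show ?case by (rule exI[where x="{0}"]) auto
next
  case (Cons i u)
  then obtain M where M: "finite M" "M \<noteq> {}" "\<forall>m\<in>M. \<forall>k. m$k \<in> \<int>"
    "\<And>X. Tword u X = (\<Union>m\<in>M. (\<lambda>x. (1/5^length u) *\<^sub>R (m + x)) ` X)" by blast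
  define n where "n = length u"
  define M' where "M' = (\<lambda>(d,m). (5^n) *\<^sub>R d + m) ` (Dig i \<times> M)"
  have rescale: "(1/5) *\<^sub>R (d + (1/5^n) *\<^sub>R (m + x)) = (1/5^Suc n) *\<^sub>R (((5^n) *\<^sub>R d + m) + x)"
    for d m x :: "real^3"
    by (simp add: scaleR_add_right field_simps)
  have "finite M'" unfolding M'_def using M(1) finite_Dig by auto
  moreover have "M' \<noteq> {}" unfolding M'_def using M(2) Dig_nonempty by auto
  moreover have "\<forall>m\<in>M'. \<forall>k. m$k \<in> \<int>"
    unfolding M'_def using M(3) grid5_nth(1)[OF subsetD[OF Dig_subset_grid5]]
    by (auto intro!: Ints_add Ints_mult)
  moreover have "Tword (i#u) X = (\<Union>m\<in>M'. (\<lambda>x. (1/5^length (i#u)) *\<^sub>R (m + x)) ` X)" for X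
  proof -
    have "Tword (i#u) X
        = (\<Union>d\<in>Dig i. (\<lambda>a. (1/5) *\<^sub>R (d + a)) ` (\<Union>m\<in>M. (\<lambda>x. (1/5^n) *\<^sub>R (m + x)) ` X))"
      by (simp add: Tmap_def M(4) n_def)
    also have "\<dots> = (\<Union>(d,m)\<in>Dig i \<times> M. (\<lambda>x. (1/5^Suc n) *\<^sub>R (((5^n) *\<^sub>R d + m) + x)) ` X)"
      unfolding rescale[symmetric] by auto
    also have "\<dots> = (\<Union>m\<in>M'. (\<lambda>x. (1/5^Suc n) *\<^sub>R (m + x)) ` X)"
      unfolding M'_def by auto
    finally show ?thesis by (simp add: n_def)
  qed
  ultimately show ?case by blast
qed

lemma compact_Tword: "compact X \<Longrightarrow> compact (Tword u X)"
proof -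
  assume X: "compact X"
  obtain M where M: "finite M"
    "\<And>X. Tword u X = (\<Union>m\<in>M. (\<lambda>x. (1/5^length u) *\<^sub>R (m + x)) ` X)"
    using Tword_eq_UN_translates[of u] by auto
  have "compact ((\<lambda>x. (1/5^length u) *\<^sub>R (m + x)) ` X)" for m
    by (intro compact_continuous_image X continuous_intros)
  then show ?thesis unfolding M(2) using M(1) by blast
qed

lemma Tword_nonempty: "X \<noteq> {} \<Longrightarrow> Tword u X \<noteq> {}"
  using Tword_eq_UN_translates[of u] by auto

lemma UN_image_INT_decseq:
  assumes M: "finite M" and inj: "\<And>m. inj (f m)" and dec: "decseq A"
  shows "(\<Union>m\<in>M. f m ` (\<Inter>k. A k)) = (\<Inter>k. \<Union>m\<in>M. f m ` A k)"
proof
  show "(\<Inter>k. \<Union>m\<in>M. f m ` A k) \<subseteq> (\<Union>m\<in>M. f m ` (\<Inter>k. A k))"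
  proof
    fix x assume x: "x \<in> (\<Inter>k. \<Union>m\<in>M. f m ` A k)"
    have "\<exists>m\<in>M. \<forall>k. x \<in> f m ` A k"
    proof (rule ccontr)
      assume "\<not> ?thesis"
      then obtain km where km: "\<And>m. m \<in> M \<Longrightarrow> x \<notin> f m ` A (km m)" by metis
      define K where "K = Max (km ` M)"
      from x obtain m where m: "m \<in> M" "x \<in> f m ` A K" by blast
      have "A K \<subseteq> A (km m)" using dec M m(1) unfolding K_def decseq_def by auto
      then show False using km[OF m(1)] m(2) by blast
    qed
    then obtain m where m: "m \<in> M" "\<And>k. x \<in> f m ` A k" by blast
    then obtain y where y: "x = f m y" by blast
    have "y \<in> A k" for k using m(2)[of k] y inj[of m] by (auto dest: injD)
    then show "x \<in> (\<Union>m\<in>M. f m ` (\<Inter>k. A k))" using m(1) y by blast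
  qed
qed blast

lemma Tmap_INT_decseq: "decseq A \<Longrightarrow> Tmap i (\<Inter>k. A k) = (\<Inter>k. Tmap i (A k))"
  unfolding Tmap_def by (rule UN_image_INT_decseq[OF finite_Dig]) (auto intro: injI)

lemma decseq_Tword_prefixes: "decseq (\<lambda>k. Tword (map \<alpha> [0..<k]) unit_cube)"
  by (rule decseq_SucI) (simp add: Tword_append Tword_mono[OF Tmap_unit_cube])

lemma Kcomp_eq_INT: "Kcomp \<alpha> = (\<Inter>k. Tword (map \<alpha> [0..<k]) unit_cube)"
  unfolding Kcomp_def using INT_decseq_offset[OF decseq_Tword_prefixes, where n=1] by simp

lemma Kcomp_subset_unit_cube: "Kcomp \<alpha> \<subseteq> unit_cube"
proof -
  have "Kcomp \<alpha> \<subseteq> Tword (map \<alpha> [0..<0]) unit_cube" unfolding Kcomp_eq_INT by blast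
  then show ?thesis by simp
qed

lemma compact_unit_cube: "compact unit_cube"
proof -
  have "unit_cube = cbox 0 (vec 1)" by (auto simp: unit_cube_def mem_box_cart)
  then show ?thesis by (metis compact_cbox)
qed

lemma compact_Kcomp: "compact (Kcomp \<alpha>)"
proof -
  have "closed (Kcomp \<alpha>)" unfolding Kcomp_eq_INT
    by (intro closed_INT ballI compact_imp_closed compact_Tword compact_unit_cube)
  then show ?thesis
    using compact_Int_closed[OF compact_unit_cube] Kcomp_subset_unit_cube by (metis inf.absorb2)
qed

lemma Kcomp_nonempty: "Kcomp \<alpha> \<noteq> {}"
proof -
  have "0 \<in> unit_cube" by (simp add: unit_cube_def)
  then have "\<Inter>(range (\<lambda>k. Tword (map \<alpha> [0..<k]) unit_cube)) \<noteq> {}"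
    using decseq_Tword_prefixes[of \<alpha>]
    by (intro compact_nest compact_Tword compact_unit_cube Tword_nonempty) (auto simp: decseq_def)
  then show ?thesis unfolding Kcomp_eq_INT .
qed

lemma Tmap_Kcomp: "Tmap i (Kcomp \<alpha>) = Kcomp (case_nat i \<alpha>)"
proof -
  let ?G = "\<lambda>k. Tword (map (case_nat i \<alpha>) [0..<k]) unit_cube"
  have "Tmap i (Kcomp \<alpha>) = (\<Inter>k. ?G (Suc k))"
    unfolding Kcomp_eq_INT Tmap_INT_decseq[OF decseq_Tword_prefixes] by (simp del: upt_Suc add: map_upt_Suc)
  also have "\<dots> = (\<Inter>k. ?G k)"
    using INT_decseq_offset[OF decseq_Tword_prefixes[of "case_nat i \<alpha>"], where n=1]
    by (simp add: atLeast_Suc_greaterThan greaterThan_0 image_image)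
  finally show ?thesis unfolding Kcomp_eq_INT .
qed

lemma Kcomp_unfold: "Kcomp \<alpha> = Tword (map \<alpha> [0..<n]) (Kcomp (\<lambda>k. \<alpha> (n + k)))"
proof (induction n)
  case (Suc n)
  have "case_nat (\<alpha> n) (\<lambda>k. \<alpha> (Suc n + k)) = (\<lambda>k. \<alpha> (n + k))"
    by (rule ext) (simp split: nat.split)
  then have "Kcomp (\<lambda>k. \<alpha> (n + k)) = Tmap (\<alpha> n) (Kcomp (\<lambda>k. \<alpha> (Suc n + k)))"
    by (simp add: Tmap_Kcomp)
  with Suc.IH show ?case by (simp add: Tword_append)
qed simp

lemma hausdist_commute: "hausdist A B = hausdist B A"
  unfolding hausdist_def by (simp add: max.commute)

lemma hausdist_leI:
  assumes "A \<noteq> {}" "B \<noteq> {}"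
    and "\<And>a. a \<in> A \<Longrightarrow> \<exists>b\<in>B. dist a b \<le> r"
    and "\<And>b. b \<in> B \<Longrightarrow> \<exists>a\<in>A. dist b a \<le> r"
  shows "hausdist A B \<le> r"
proof -
  have "setdist {x} Y \<le> r" if "\<exists>y\<in>Y. dist x y \<le> r" for x and Y :: "(real^3) set"
    using that setdist_le_dist[of x "{x}" _ Y] by force
  then have "(SUP a\<in>A. setdist {a} B) \<le> r" "(SUP b\<in>B. setdist {b} A) \<le> r"
    using assms by (auto intro!: cSUP_least)
  then show ?thesis unfolding hausdist_def by simp
qed

lemma le_hausdistI:
  assumes "compact A" "B \<noteq> {}" "a \<in> A" and "\<And>b. b \<in> B \<Longrightarrow> r \<le> dist a b"
  shows "r \<le> hausdist A B"
proof -
  have bdd: "bdd_above ((\<lambda>a. setdist {a} B) ` A)"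
    by (intro bounded_imp_bdd_above compact_imp_bounded compact_continuous_image assms(1)
        continuous_on_setdist)
  have "r \<le> setdist {a} B" using assms(2,4) by (intro le_setdistI) auto
  also have "\<dots> \<le> (SUP a\<in>A. setdist {a} B)" by (rule cSUP_upper[OF assms(3) bdd])
  also have "\<dots> \<le> hausdist A B" unfolding hausdist_def by simp
  finally show ?thesis .
qed

lemma hausdist_refl_le: "A \<noteq> {} \<Longrightarrow> hausdist A A \<le> 0"
  by (rule hausdist_leI) auto

lemma dist_unit_cube_le: "x \<in> unit_cube \<Longrightarrow> y \<in> unit_cube \<Longrightarrow> dist x y \<le> 3"
proof -
  assume "x \<in> unit_cube" "y \<in> unit_cube"
  then have "\<bar>(x - y)$i\<bar> \<le> 1" for i unfolding unit_cube_def by (simp add: abs_le_iff) (smt (verit))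
  then have "(\<Sum>i\<in>UNIV. \<bar>(x - y)$i\<bar>) \<le> of_nat CARD(3) * 1" by (intro sum_bounded_above)
  then show ?thesis using norm_le_l1_cart[of "x - y"] by (simp add: dist_norm)
qed

lemma hausdist_Tword_le:
  assumes "X \<subseteq> unit_cube" "Y \<subseteq> unit_cube" "X \<noteq> {}" "Y \<noteq> {}"
  shows "hausdist (Tword u X) (Tword u Y) \<le> 3 / 5^length u"
proof -
  define c :: real where "c = 1/5^length u"
  obtain M where M: "\<And>X. Tword u X = (\<Union>m\<in>M. (\<lambda>x. c *\<^sub>R (m + x)) ` X)"
    using Tword_eq_UN_translates[of u] unfolding c_def by auto
  have close: "\<exists>b\<in>Tword u Y. dist a b \<le> 3 / 5^length u"
    if a: "a \<in> Tword u X" and cube: "X \<subseteq> unit_cube" "Y \<subseteq> unit_cube" and "Y \<noteq> {}"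
    for a X Y
  proof -
    obtain m x where m: "m \<in> M" and x: "x \<in> X" and a: "a = c *\<^sub>R (m + x)"
      using a unfolding M by blast
    obtain y where y: "y \<in> Y" using \<open>Y \<noteq> {}\<close> by blast
    have "c *\<^sub>R (m + x) - c *\<^sub>R (m + y) = c *\<^sub>R (x - y)" by (simp add: algebra_simps)
    then have "dist a (c *\<^sub>R (m + y)) = c * dist x y" by (simp add: a dist_norm c_def)
    also have "\<dots> \<le> c * 3"
      using dist_unit_cube_le[of x y] x y cube by (intro mult_left_mono) (auto simp: c_def)
    finally show ?thesis using m y unfolding M c_def by auto
  qed
  show ?thesis
  proof (rule hausdist_leI)
    show "Tword u X \<noteq> {}" "Tword u Y \<noteq> {}" using assms(3,4) by (simp_all add: Tword_nonempty)
  next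
    fix a assume "a \<in> Tword u X"
    then show "\<exists>b\<in>Tword u Y. dist a b \<le> 3 / 5^length u" by (rule close) (use assms in auto)
  next
    fix b assume "b \<in> Tword u Y"
    then show "\<exists>a\<in>Tword u X. dist b a \<le> 3 / 5^length u" by (rule close) (use assms in auto)
  qed
qed

lemma hausdist_Kcomp_le:
  assumes "\<forall>i<n. \<alpha> i = \<beta> i"
  shows "hausdist (Kcomp \<alpha>) (Kcomp \<beta>) \<le> 3 / 5^n"
proof -
  define w where "w = map \<alpha> [0..<n]"
  have "w = map \<beta> [0..<n]" using assms unfolding w_def by simp
  then have "Kcomp \<beta> = Tword w (Kcomp (\<lambda>k. \<beta> (n + k)))" by (simp only: Kcomp_unfold[symmetric])
  moreover have "Kcomp \<alpha> = Tword w (Kcomp (\<lambda>k. \<alpha> (n + k)))" unfolding w_def by (rule Kcomp_unfold)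
  moreover have "length w = n" by (simp add: w_def)
  ultimately show ?thesis
    using hausdist_Tword_le[of "Kcomp (\<lambda>k. \<alpha> (n + k))" "Kcomp (\<lambda>k. \<beta> (n + k))" w]
    by (simp add: Kcomp_subset_unit_cube Kcomp_nonempty)
qed

lemma translates_separated:
  fixes x y m m' :: "real^3"
  assumes x: "\<And>k. 2/5 \<le> x$k \<and> x$k \<le> 3/5" and y: "\<And>k. 0 \<le> y$k \<and> y$k \<le> 1"
    and y_edge: "\<exists>k. y$k \<le> 1/5 \<or> 4/5 \<le> y$k"
    and m: "\<And>k. m$k \<in> \<int>" and m': "\<And>k. m'$k \<in> \<int>"
  shows "\<exists>k. 1/5 \<le> \<bar>(m + x)$k - (m' + y)$k\<bar>"
proof (cases "m = m'")
  case True
  obtain k where "y$k \<le> 1/5 \<or> 4/5 \<le> y$k" using y_edge by blast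
  then have "1/5 \<le> \<bar>(m + x)$k - (m' + y)$k\<bar>" using x[of k] True by auto
  then show ?thesis by blast
next
  case False
  then obtain k where k: "m$k \<noteq> m'$k" by (auto simp: vec_eq_iff)
  have "1 \<le> \<bar>m$k - m'$k\<bar>" using k m m' by (intro Ints_nonzero_abs_ge1) auto
  moreover have "(m + x)$k - (m' + y)$k = (m$k - m'$k) + (x$k - y$k)" by simp
  ultimately have "1/5 \<le> \<bar>(m + x)$k - (m' + y)$k\<bar>" using x[of k] y[of k] by linarith
  then show ?thesis by blast
qed

lemma Tmap0_meets_centre_cube:
  assumes "X \<noteq> {}" "X \<subseteq> unit_cube"
  shows "\<exists>x\<in>Tmap 0 X. \<forall>k. 2/5 \<le> x$k \<and> x$k \<le> 3/5"
proof -
  obtain x0 where x0: "x0 \<in> X" using assms(1) by blast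
  then have "(1/5) *\<^sub>R ((\<chi> k. 2) + x0) \<in> Tmap 0 X"
    unfolding Tmap_def using centre_in_Dig0 by blast
  moreover have "\<forall>k. 2/5 \<le> ((1/5) *\<^sub>R ((\<chi> k. 2) + x0))$k \<and> ((1/5) *\<^sub>R ((\<chi> k. 2) + x0))$k \<le> 3/5"
    using x0 assms(2) unfolding unit_cube_def by auto
  ultimately show ?thesis by blast
qed

lemma Tmap_frame_near_boundary:
  assumes "j \<noteq> 0" "Y \<subseteq> unit_cube" "y \<in> Tmap j Y"
  shows "y \<in> unit_cube" and "\<exists>k. y$k \<le> 1/5 \<or> 4/5 \<le> y$k"
proof -
  obtain d z where d: "d \<in> Dframe" and z: "z \<in> Y" and y: "y = (1/5) *\<^sub>R (d + z)"
    using assms(1,3) unfolding Tmap_def Dig_def by auto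
  have z01: "0 \<le> z$k \<and> z$k \<le> 1" for k using z assms(2) unfolding unit_cube_def by auto
  show "y \<in> unit_cube"
    using Tmap_unit_cube assms(2,3) Tword_mono[of Y unit_cube "[j]"] by auto
  obtain k where "d$k \<in> {0,4}" using d unfolding Dframe_def by blast
  then show "\<exists>k. y$k \<le> 1/5 \<or> 4/5 \<le> y$k" using z01[of k] unfolding y by (intro exI[of _ k]) auto
qed

lemma hausdist_Tword_centre_frame:
  assumes X: "compact X" "X \<noteq> {}" "X \<subseteq> unit_cube" and Y: "Y \<subseteq> unit_cube" "Y \<noteq> {}"
    and "j \<noteq> 0"
  shows "1/5^Suc (length u) \<le> hausdist (Tword u (Tmap 0 X)) (Tword u (Tmap j Y))"
proof -
  define c :: real where "c = 1/5^length u"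
  obtain M where M: "M \<noteq> {}" "\<forall>m\<in>M. \<forall>k. m$k \<in> \<int>"
    "\<And>X. Tword u X = (\<Union>m\<in>M. (\<lambda>x. c *\<^sub>R (m + x)) ` X)"
    using Tword_eq_UN_translates[of u] unfolding c_def by auto
  obtain m where m: "m \<in> M" using M(1) by blast
  obtain x where x: "x \<in> Tmap 0 X" and x_centre: "\<And>k. 2/5 \<le> x$k \<and> x$k \<le> 3/5"
    using Tmap0_meets_centre_cube[OF X(2,3)] by blast
  have a: "c *\<^sub>R (m + x) \<in> Tword u (Tmap 0 X)" unfolding M(3) using m x by blast
  have "compact (Tword u (Tmap 0 X))" using compact_Tword[OF compact_Tword[OF X(1), of "[0]"]] by simp
  then show ?thesis
  proof (rule le_hausdistI[OF _ _ a])
    show "Tword u (Tmap j Y) \<noteq> {}" using Y(2) Tword_nonempty[of _ "u @ [j]"] by (simp add: Tword_append)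
  next
    fix b assume "b \<in> Tword u (Tmap j Y)"
    then obtain m' y where m': "m' \<in> M" and y: "y \<in> Tmap j Y" and b: "b = c *\<^sub>R (m' + y)"
      unfolding M(3) by blast
    have "0 \<le> y$k \<and> y$k \<le> 1" for k
      using Tmap_frame_near_boundary(1)[OF \<open>j \<noteq> 0\<close> Y(1) y] unfolding unit_cube_def by blast
    then obtain k where k: "1/5 \<le> \<bar>(m + x)$k - (m' + y)$k\<bar>"
      using translates_separated[OF x_centre _ Tmap_frame_near_boundary(2)[OF \<open>j \<noteq> 0\<close> Y(1) y]]
        M(2) m m' by blast
    have "1/5^Suc (length u) = c * (1/5)" by (simp add: c_def)
    also have "\<dots> \<le> c * \<bar>(m + x)$k - (m' + y)$k\<bar>" using k by (intro mult_left_mono) (auto simp: c_def)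
    also have "\<dots> = \<bar>(c *\<^sub>R (m + x) - b)$k\<bar>"
    proof -
      have "(c *\<^sub>R (m + x) - b)$k = c * ((m + x)$k - (m' + y)$k)"
        unfolding b by (simp add: right_diff_distrib)
      then show ?thesis by (simp add: abs_mult c_def)
    qed
    also have "\<dots> \<le> dist (c *\<^sub>R (m + x)) b" unfolding dist_norm by (rule component_le_norm_cart)
    finally show "1/5^Suc (length u) \<le> dist (c *\<^sub>R (m + x)) b" .
  qed
qed

lemma hausdist_Kcomp_ge:
  assumes "\<forall>i<j. \<alpha> i = \<beta> i" and "\<alpha> j = 0" and "\<beta> j \<noteq> 0"
  shows "1/5^Suc j \<le> hausdist (Kcomp \<alpha>) (Kcomp \<beta>)"
proof -
  define w where "w = map \<alpha> [0..<j]"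
  have unfold: "Kcomp \<gamma> = Tword (map \<gamma> [0..<j]) (Tmap (\<gamma> j) (Kcomp (\<lambda>k. \<gamma> (Suc j + k))))"
    for \<gamma> :: "nat \<Rightarrow> nat"
    using Kcomp_unfold[of \<gamma> "Suc j"] by (simp add: Tword_append)
  have "w = map \<beta> [0..<j]" using assms(1) unfolding w_def by simp
  then have "Kcomp \<beta> = Tword w (Tmap (\<beta> j) (Kcomp (\<lambda>k. \<beta> (Suc j + k))))"
    by (simp only: unfold[symmetric])
  moreover have "Kcomp \<alpha> = Tword w (Tmap 0 (Kcomp (\<lambda>k. \<alpha> (Suc j + k))))"
    using unfold[of \<alpha>] assms(2) unfolding w_def by simp
  moreover have "length w = j" by (simp add: w_def)
  ultimately show ?thesis
    using hausdist_Tword_centre_frame[of "Kcomp (\<lambda>k. \<alpha> (Suc j + k))"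
        "Kcomp (\<lambda>k. \<beta> (Suc j + k))" "\<beta> j" w] assms(3)
    by (simp add: compact_Kcomp Kcomp_nonempty Kcomp_subset_unit_cube)
qed

lemma first_differenceE:
  assumes "\<alpha> \<noteq> (\<beta> :: nat \<Rightarrow> 'a)"
  obtains j where "\<forall>i<j. \<alpha> i = \<beta> i" and "\<alpha> j \<noteq> \<beta> j"
proof -
  obtain n where "\<alpha> n \<noteq> \<beta> n" using assms by blast
  then have "\<alpha> (LEAST n. \<alpha> n \<noteq> \<beta> n) \<noteq> \<beta> (LEAST n. \<alpha> n \<noteq> \<beta> n)" by (rule LeastI)
  with not_less_Least[of _ "\<lambda>n. \<alpha> n \<noteq> \<beta> n"] show ?thesis using that by blast
qed

definition binary_words :: "(nat \<Rightarrow> nat) set" where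
  "binary_words = {\<alpha>. \<forall>n. \<alpha> n \<in> {0,1}}"

lemma binary_wordsD: "\<alpha> \<in> binary_words \<Longrightarrow> \<alpha> n = 0 \<or> \<alpha> n = 1"
  unfolding binary_words_def by blast

lemma hausdist_Kcomp_ge_binary:
  assumes "\<alpha> \<in> binary_words" "\<beta> \<in> binary_words" "\<forall>i<j. \<alpha> i = \<beta> i" "\<alpha> j \<noteq> \<beta> j"
  shows "1/5^Suc j \<le> hausdist (Kcomp \<alpha>) (Kcomp \<beta>)"
proof (cases "\<alpha> j = 0")
  case True
  then show ?thesis using hausdist_Kcomp_ge assms(3,4) by simp
next
  case False
  then have "\<beta> j = 0" using binary_wordsD[OF assms(1), of j] binary_wordsD[OF assms(2), of j] assms(4)
    by auto
  then show ?thesis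
    using hausdist_Kcomp_ge[of j \<beta> \<alpha>] assms(3,4) by (simp add: hausdist_commute)
qed

lemma inj_on_Kcomp: "inj_on Kcomp binary_words"
proof (rule inj_onI, rule ccontr)
  fix \<alpha> \<beta> assume \<alpha>: "\<alpha> \<in> binary_words" and \<beta>: "\<beta> \<in> binary_words"
    and eq: "Kcomp \<alpha> = Kcomp \<beta>" and "\<alpha> \<noteq> \<beta>"
  obtain j where j: "\<forall>i<j. \<alpha> i = \<beta> i" "\<alpha> j \<noteq> \<beta> j"
    using \<open>\<alpha> \<noteq> \<beta>\<close> by (rule first_differenceE)
  have "1/5^Suc j \<le> hausdist (Kcomp \<alpha>) (Kcomp \<beta>)" by (rule hausdist_Kcomp_ge_binary[OF \<alpha> \<beta> j])
  also have "\<dots> \<le> 0" unfolding eq by (rule hausdist_refl_le[OF Kcomp_nonempty])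
  finally have "1/5^Suc j \<le> (0::real)" .
  moreover have "0 < (1::real)/5^Suc j" by simp
  ultimately show False by linarith
qed

definition cantor_code :: "(nat \<Rightarrow> nat) \<Rightarrow> real" where
  "cantor_code \<alpha> = (\<Sum>n. 2 * real (\<alpha> n) / 3 ^ Suc n)"

lemma ternary_tail_sums: "(\<lambda>k. 2 / 3 ^ Suc (k + m) :: real) sums (1/3^m)"
proof -
  have "(\<lambda>k. (2/3^Suc m) * (1/3::real)^k) sums ((2/3^Suc m) * (1 / (1 - 1/3)))"
    by (intro sums_mult geometric_sums) simp
  moreover have "(2/3^Suc m) * (1/3::real)^k = 2 / 3 ^ Suc (k + m)" for k
    by (simp add: power_add power_one_over)
  ultimately show ?thesis by simp
qed

lemma ternary_tail_bound:
  fixes e :: "nat \<Rightarrow> real"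
  assumes "\<And>n. \<bar>e n\<bar> \<le> 1"
  shows "summable (\<lambda>k. 2 * e (k + m) / 3 ^ Suc (k + m))"
    and "\<bar>\<Sum>k. 2 * e (k + m) / 3 ^ Suc (k + m)\<bar> \<le> 1/3^m"
proof -
  have bound: "\<bar>2 * e (k + m) / 3 ^ Suc (k + m)\<bar> \<le> 2 / 3 ^ Suc (k + m)" for k
    using assms[of "k + m"] by (simp add: abs_mult divide_right_mono)
  have geom: "summable (\<lambda>k. 2 / 3 ^ Suc (k + m) :: real)"
    using ternary_tail_sums sums_summable by blast
  have abs_summable: "summable (\<lambda>k. \<bar>2 * e (k + m) / 3 ^ Suc (k + m)\<bar>)"
    by (rule summable_comparison_test[OF _ geom]) (use bound in auto)
  then show "summable (\<lambda>k. 2 * e (k + m) / 3 ^ Suc (k + m))" by (rule summable_rabs_cancel)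
  have "\<bar>\<Sum>k. 2 * e (k + m) / 3 ^ Suc (k + m)\<bar> \<le> (\<Sum>k. \<bar>2 * e (k + m) / 3 ^ Suc (k + m)\<bar>)"
    by (rule summable_rabs[OF abs_summable])
  also have "\<dots> \<le> (\<Sum>k. 2 / 3 ^ Suc (k + m))" by (rule suminf_le[OF bound abs_summable geom])
  also have "\<dots> = 1/3^m" using ternary_tail_sums sums_unique by metis
  finally show "\<bar>\<Sum>k. 2 * e (k + m) / 3 ^ Suc (k + m)\<bar> \<le> 1/3^m" .
qed

lemma summable_cantor_code: "\<alpha> \<in> binary_words \<Longrightarrow> summable (\<lambda>n. 2 * real (\<alpha> n) / 3 ^ Suc n)"
proof -
  assume "\<alpha> \<in> binary_words"
  then have "\<bar>real (\<alpha> n)\<bar> \<le> 1" for n using binary_wordsD[of \<alpha> n] by auto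
  from ternary_tail_bound(1)[of "\<lambda>n. real (\<alpha> n)" 0, OF this] show ?thesis by simp
qed

lemma cantor_code_diff_eq_tail:
  assumes "\<alpha> \<in> binary_words" "\<beta> \<in> binary_words" "\<forall>i<j. \<alpha> i = \<beta> i"
  shows "cantor_code \<alpha> - cantor_code \<beta>
    = (\<Sum>k. 2 * (real (\<alpha> (k + j)) - real (\<beta> (k + j))) / 3 ^ Suc (k + j))"
proof -
  define g where "g n = 2 * (real (\<alpha> n) - real (\<beta> n)) / 3 ^ Suc n" for n
  have "cantor_code \<alpha> - cantor_code \<beta> = suminf g"
    unfolding cantor_code_def g_def
      suminf_diff[OF summable_cantor_code[OF assms(1)] summable_cantor_code[OF assms(2)]]
    by (simp add: diff_divide_distrib right_diff_distrib)
  also have "\<dots> = (\<Sum>k. g (k + j))"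
  proof -
    have "summable g"
      unfolding g_def using summable_diff[OF summable_cantor_code[OF assms(1)]
          summable_cantor_code[OF assms(2)]] by (simp add: diff_divide_distrib right_diff_distrib)
    then have "suminf g = (\<Sum>k. g (k + j)) + (\<Sum>i<j. g i)" by (rule suminf_split_initial_segment)
    moreover have "(\<Sum>i<j. g i) = 0" using assms(3) unfolding g_def by simp
    ultimately show ?thesis by simp
  qed
  finally show ?thesis unfolding g_def .
qed

lemma cantor_code_diff_le:
  assumes "\<alpha> \<in> binary_words" "\<beta> \<in> binary_words" "\<forall>i<j. \<alpha> i = \<beta> i"
  shows "\<bar>cantor_code \<alpha> - cantor_code \<beta>\<bar> \<le> 1/3^j"
proof -
  have "\<bar>real (\<alpha> n) - real (\<beta> n)\<bar> \<le> 1" for n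
    using binary_wordsD[OF assms(1), of n] binary_wordsD[OF assms(2), of n] by auto
  from ternary_tail_bound(2)[of "\<lambda>n. real (\<alpha> n) - real (\<beta> n)" j, OF this]
  show ?thesis unfolding cantor_code_diff_eq_tail[OF assms] .
qed

lemma cantor_code_diff_ge:
  assumes "\<alpha> \<in> binary_words" "\<beta> \<in> binary_words" "\<forall>i<j. \<alpha> i = \<beta> i" "\<alpha> j \<noteq> \<beta> j"
  shows "1/3^Suc j \<le> \<bar>cantor_code \<alpha> - cantor_code \<beta>\<bar>"
proof -
  define e where "e n = real (\<alpha> n) - real (\<beta> n)" for n
  have e: "\<bar>e n\<bar> \<le> 1" for n
    unfolding e_def using binary_wordsD[OF assms(1), of n] binary_wordsD[OF assms(2), of n] by auto
  have "\<bar>e j\<bar> = 1"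
    unfolding e_def using binary_wordsD[OF assms(1), of j] binary_wordsD[OF assms(2), of j] assms(4)
    by auto
  then have head: "\<bar>2 * e j / 3 ^ Suc j\<bar> = 2 / 3 ^ Suc j" by (simp add: abs_mult)
  have "(\<Sum>k. 2 * e (k + j) / 3 ^ Suc (k + j))
      = 2 * e j / 3 ^ Suc j + (\<Sum>k. 2 * e (k + Suc j) / 3 ^ Suc (k + Suc j))"
    using suminf_split_head[OF ternary_tail_bound(1)[of e j, OF e]] by simp
  moreover have "\<bar>\<Sum>k. 2 * e (k + Suc j) / 3 ^ Suc (k + Suc j)\<bar> \<le> 1/3^Suc j"
    by (rule ternary_tail_bound(2)[of e "Suc j", OF e])
  moreover have "cantor_code \<alpha> - cantor_code \<beta> = (\<Sum>k. 2 * e (k + j) / 3 ^ Suc (k + j))"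
    unfolding e_def by (rule cantor_code_diff_eq_tail[OF assms(1-3)])
  ultimately show ?thesis using head by linarith
qed

lemma cantor_code_case_nat:
  assumes "\<alpha> \<in> binary_words"
  shows "cantor_code (case_nat i \<alpha>) = (2 * real i + cantor_code \<alpha>) / 3"
proof -
  define f where "f n = 2 * real (case_nat i \<alpha> n) / 3 ^ Suc n" for n
  have tail: "f (Suc n) = 2 * real (\<alpha> n) / 3 ^ Suc n / 3" for n unfolding f_def by simp
  have "summable (\<lambda>n. f (Suc n))"
    unfolding tail by (intro summable_divide summable_cantor_code assms)
  then have "summable f" by (simp only: summable_Suc_iff)
  then have "(\<Sum>n. f (Suc n)) = suminf f - f 0" by (rule suminf_split_head)
  then have "cantor_code (case_nat i \<alpha>) = f 0 + (\<Sum>n. f (Suc n))"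
    unfolding cantor_code_def f_def[symmetric] by simp
  also have "(\<Sum>n. f (Suc n)) = cantor_code \<alpha> / 3"
    unfolding tail cantor_code_def by (rule suminf_divide[OF summable_cantor_code[OF assms]])
  finally show ?thesis by (simp add: f_def add_divide_distrib)
qed

lemma cantor_code_close_common_prefix:
  assumes "\<alpha> \<in> binary_words" "\<beta> \<in> binary_words" "\<bar>cantor_code \<alpha> - cantor_code \<beta>\<bar> < 1/3^n"
  shows "\<forall>i<n. \<alpha> i = \<beta> i"
proof (rule ccontr)
  assume differ: "\<not> (\<forall>i<n. \<alpha> i = \<beta> i)"
  then have "\<alpha> \<noteq> \<beta>" by auto
  then obtain j where j: "\<forall>i<j. \<alpha> i = \<beta> i" "\<alpha> j \<noteq> \<beta> j" by (rule first_differenceE)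
  have "j < n"
  proof (rule ccontr)
    assume "\<not> j < n"
    then show False using differ j(1) by auto
  qed
  then have "(1::real)/3^n \<le> 1/3^Suc j" by (intro divide_left_mono power_increasing) auto
  also have "\<dots> \<le> \<bar>cantor_code \<alpha> - cantor_code \<beta>\<bar>" by (rule cantor_code_diff_ge[OF assms(1,2) j])
  finally show False using assms(3) by simp
qed

lemma inj_on_cantor_code: "inj_on cantor_code binary_words"
proof (rule inj_onI)
  fix \<alpha> \<beta> assume "\<alpha> \<in> binary_words" "\<beta> \<in> binary_words" "cantor_code \<alpha> = cantor_code \<beta>"
  then have "\<forall>i<n. \<alpha> i = \<beta> i" for n by (intro cantor_code_close_common_prefix) auto
  then show "\<alpha> = \<beta>" by blast
qed

lemma inverse_power_powr_log_ratio:
  fixes a b :: real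
  assumes "0 < a" "1 < b"
  shows "(1 / b^n) powr (ln a / ln b) = 1 / a^n"
proof -
  have "(1 / b^n) powr (ln a / ln b) = exp (ln (1 / b^n) * (ln a / ln b))"
    using assms by (simp add: powr_def mult.commute)
  also have "ln (1 / b^n) * (ln a / ln b) = - (real n * ln a)"
    using assms by (simp add: ln_div ln_realpow)
  also have "exp (- (real n * ln a)) = 1 / a^n"
    using assms by (simp add: exp_minus exp_of_nat_mult inverse_eq_divide)
  finally show ?thesis .
qed

lemma cantor_code_Holder:
  assumes "\<alpha> \<in> binary_words" "\<beta> \<in> binary_words"
  shows "\<bar>cantor_code \<alpha> - cantor_code \<beta>\<bar> \<le> 3 * hausdist (Kcomp \<alpha>) (Kcomp \<beta>) powr (ln 3 / ln 5)"
proof (cases "\<alpha> = \<beta>")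
  case False
  then obtain j where j: "\<forall>i<j. \<alpha> i = \<beta> i" "\<alpha> j \<noteq> \<beta> j" by (rule first_differenceE)
  have "\<bar>cantor_code \<alpha> - cantor_code \<beta>\<bar> \<le> 1/3^j" by (rule cantor_code_diff_le[OF assms j(1)])
  also have "\<dots> = 3 * (1/5^Suc j) powr (ln 3 / ln 5)"
    by (simp only: inverse_power_powr_log_ratio) simp
  also have "\<dots> \<le> 3 * hausdist (Kcomp \<alpha>) (Kcomp \<beta>) powr (ln 3 / ln 5)"
    using hausdist_Kcomp_ge_binary[OF assms j] by (intro mult_left_mono powr_mono2) auto
  finally show ?thesis .
qed simp

lemma Kcomp_close_if_cantor_code_close:
  assumes "\<beta> \<in> binary_words" "\<epsilon> > 0"
  shows "\<exists>\<delta>>0. \<forall>\<alpha>\<in>binary_words.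
    \<bar>cantor_code \<alpha> - cantor_code \<beta>\<bar> < \<delta> \<longrightarrow> hausdist (Kcomp \<alpha>) (Kcomp \<beta>) < \<epsilon>"
proof -
  obtain n where n: "(1/5::real)^n < \<epsilon>/3" using real_arch_pow_inv[of "\<epsilon>/3" "1/5"] assms(2) by auto
  have "hausdist (Kcomp \<alpha>) (Kcomp \<beta>) < \<epsilon>"
    if "\<alpha> \<in> binary_words" "\<bar>cantor_code \<alpha> - cantor_code \<beta>\<bar> < 1/3^n" for \<alpha>
  proof -
    have "hausdist (Kcomp \<alpha>) (Kcomp \<beta>) \<le> 3/5^n"
      by (intro hausdist_Kcomp_le cantor_code_close_common_prefix that assms(1))
    also have "\<dots> < \<epsilon>" using n by (simp add: power_one_over)
    finally show ?thesis .
  qed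
  then show ?thesis by (intro exI[of _ "1/3^n"]) auto
qed

lemma Qcomp_eq_image: "Qcomp = Kcomp ` binary_words"
  unfolding Qcomp_def binary_words_def by blast

lemma cantor_set_eq_image: "cantor_set = cantor_code ` binary_words"
  unfolding cantor_set_def cantor_code_def binary_words_def by blast

lemma case_nat_in_binary_words: "i \<le> 1 \<Longrightarrow> \<alpha> \<in> binary_words \<Longrightarrow> case_nat i \<alpha> \<in> binary_words"
  unfolding binary_words_def by (auto split: nat.split)

lemma binary_words_eq_case_nat: "binary_words = case_nat 0 ` binary_words \<union> case_nat 1 ` binary_words"
proof
  show "binary_words \<subseteq> case_nat 0 ` binary_words \<union> case_nat 1 ` binary_words"
  proof
    fix \<alpha> assume \<alpha>: "\<alpha> \<in> binary_words"
    then have "\<alpha> = case_nat (\<alpha> 0) (\<lambda>n. \<alpha> (Suc n))" "(\<lambda>n. \<alpha> (Suc n)) \<in> binary_words"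
      by (auto simp: binary_words_def split: nat.split)
    then show "\<alpha> \<in> case_nat 0 ` binary_words \<union> case_nat 1 ` binary_words"
      using binary_wordsD[OF \<alpha>, of 0] by (metis UnI1 UnI2 image_eqI)
  qed
qed (auto intro: case_nat_in_binary_words)

lemma Qcomp_self_similar: "Qcomp = Tmap 0 ` Qcomp \<union> Tmap 1 ` Qcomp"
proof -
  have "Qcomp = Kcomp ` (case_nat 0 ` binary_words \<union> case_nat 1 ` binary_words)"
    unfolding Qcomp_eq_image by (rule arg_cong[OF binary_words_eq_case_nat])
  also have "\<dots> = Tmap 0 ` Qcomp \<union> Tmap 1 ` Qcomp"
    unfolding Qcomp_eq_image by (simp add: image_Un image_image Tmap_Kcomp)
  finally show ?thesis .
qed

definition component_code :: "(real^3) set \<Rightarrow> real" where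
  "component_code A = cantor_code (inv_into binary_words Kcomp A)"

lemma component_code_Kcomp: "\<alpha> \<in> binary_words \<Longrightarrow> component_code (Kcomp \<alpha>) = cantor_code \<alpha>"
  by (simp add: component_code_def inv_into_f_f inj_on_Kcomp)

lemma bij_betw_component_code: "bij_betw component_code Qcomp cantor_set"
proof -
  have "bij_betw (inv_into binary_words Kcomp) Qcomp binary_words"
    unfolding Qcomp_eq_image by (intro bij_betw_inv_into inj_on_imp_bij_betw inj_on_Kcomp)
  moreover have "bij_betw cantor_code binary_words cantor_set"
    unfolding cantor_set_eq_image by (rule inj_on_imp_bij_betw[OF inj_on_cantor_code])
  ultimately have "bij_betw (cantor_code \<circ> inv_into binary_words Kcomp) Qcomp cantor_set"
    by (rule bij_betw_trans)
  moreover have "cantor_code \<circ> inv_into binary_words Kcomp = component_code"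
    by (rule ext) (simp add: component_code_def)
  ultimately show ?thesis by simp
qed

lemma component_code_Holder:
  "A \<in> Qcomp \<Longrightarrow> B \<in> Qcomp \<Longrightarrow>
    \<bar>component_code A - component_code B\<bar> \<le> 3 * hausdist A B powr (ln 3 / ln 5)"
  by (auto simp: Qcomp_eq_image component_code_Kcomp cantor_code_Holder)

lemma component_code_inverse_continuous:
  assumes "B \<in> Qcomp" "\<epsilon> > 0"
  shows "\<exists>\<delta>>0. \<forall>A\<in>Qcomp. \<bar>component_code A - component_code B\<bar> < \<delta> \<longrightarrow> hausdist A B < \<epsilon>"
proof -
  obtain \<beta> where "\<beta> \<in> binary_words" "B = Kcomp \<beta>" using assms(1) unfolding Qcomp_eq_image by blast
  with Kcomp_close_if_cantor_code_close[OF _ assms(2)] show ?thesis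
    by (auto simp: Qcomp_eq_image component_code_Kcomp)
qed

lemma component_code_Tmap:
  assumes "A \<in> Qcomp" "i \<le> 1"
  shows "component_code (Tmap i A) = (2 * real i + component_code A) / 3"
proof -
  obtain \<alpha> where \<alpha>: "\<alpha> \<in> binary_words" "A = Kcomp \<alpha>" using assms(1) unfolding Qcomp_eq_image by blast
  then show ?thesis
    using case_nat_in_binary_words[OF assms(2) \<alpha>(1)]
    by (simp add: Tmap_Kcomp component_code_Kcomp cantor_code_case_nat)
qed

theorem theorem3:
  shows "(\<forall>A\<in>Qcomp. A \<noteq> {} \<and> compact A)
    \<and> Qcomp = Tmap 0 ` Qcomp \<union> Tmap 1 ` Qcomp
    \<and> (\<exists>\<phi> :: (real^3) set \<Rightarrow> real.
          bij_betw \<phi> Qcomp cantor_set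
        \<and> (\<exists>c \<beta>. c > 0 \<and> \<beta> > 0 \<and>
             (\<forall>A\<in>Qcomp. \<forall>B\<in>Qcomp. \<bar>\<phi> A - \<phi> B\<bar> \<le> c * hausdist A B powr \<beta>))
        \<and> (\<forall>B\<in>Qcomp. \<forall>\<epsilon>>0. \<exists>\<delta>>0. \<forall>A\<in>Qcomp.
             \<bar>\<phi> A - \<phi> B\<bar> < \<delta> \<longrightarrow> hausdist A B < \<epsilon>)
        \<and> (\<forall>A\<in>Qcomp. \<phi> (Tmap 0 A) = \<phi> A / 3 \<and> \<phi> (Tmap 1 A) = \<phi> A / 3 + 2 / 3))"
proof (intro conjI)
  show "\<forall>A\<in>Qcomp. A \<noteq> {} \<and> compact A"
    using Kcomp_nonempty compact_Kcomp by (auto simp: Qcomp_eq_image)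
  show "Qcomp = Tmap 0 ` Qcomp \<union> Tmap 1 ` Qcomp" by (rule Qcomp_self_similar)
  show "\<exists>\<phi> :: (real^3) set \<Rightarrow> real.
          bij_betw \<phi> Qcomp cantor_set
        \<and> (\<exists>c \<beta>. c > 0 \<and> \<beta> > 0 \<and>
             (\<forall>A\<in>Qcomp. \<forall>B\<in>Qcomp. \<bar>\<phi> A - \<phi> B\<bar> \<le> c * hausdist A B powr \<beta>))
        \<and> (\<forall>B\<in>Qcomp. \<forall>\<epsilon>>0. \<exists>\<delta>>0. \<forall>A\<in>Qcomp.
             \<bar>\<phi> A - \<phi> B\<bar> < \<delta> \<longrightarrow> hausdist A B < \<epsilon>)
        \<and> (\<forall>A\<in>Qcomp. \<phi> (Tmap 0 A) = \<phi> A / 3 \<and> \<phi> (Tmap 1 A) = \<phi> A / 3 + 2 / 3)"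
  proof (intro exI[of _ component_code] conjI)
    show "bij_betw component_code Qcomp cantor_set" by (rule bij_betw_component_code)
    show "\<exists>c \<beta>. c > 0 \<and> \<beta> > 0 \<and> (\<forall>A\<in>Qcomp. \<forall>B\<in>Qcomp.
        \<bar>component_code A - component_code B\<bar> \<le> c * hausdist A B powr \<beta>)"
      using component_code_Holder by (intro exI[of _ 3] exI[of _ "ln 3 / ln 5"]) auto
    show "\<forall>B\<in>Qcomp. \<forall>\<epsilon>>0. \<exists>\<delta>>0. \<forall>A\<in>Qcomp.
        \<bar>component_code A - component_code B\<bar> < \<delta> \<longrightarrow> hausdist A B < \<epsilon>"
      using component_code_inverse_continuous by blast
    show "\<forall>A\<in>Qcomp. component_code (Tmap 0 A) = component_code A / 3
        \<and> component_code (Tmap 1 A) = component_code A / 3 + 2 / 3"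
      using component_code_Tmap[of _ 0] component_code_Tmap[of _ 1] by (simp add: add_divide_distrib)
  qed
qed

end
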